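(* Let $R$ be a graded ring and $\mathfrak p\in\operatorname{Spec}^h(R)$ a homogeneous prime ideal. Then the period of the local graded ring $R_{\mathfrak p}$ equals \[ \gcd\bigl(\deg(f)\ \bigm\vert\ f\in R \text{ homogeneous},\ f\notin\mathfrak p,\ \deg(f)\ne0\bigr), \] with the convention $\gcd(\emptyset)=0$.
   Context: A graded ring is a $\mathbb Z$-graded ring $R=\bigoplus_{d\in\mathbb Z}R_d$ (a monoid in graded abelian groups) for which there is $\epsilon\in R_0^\times$ with $rs=\epsilon^{\deg(r)\deg(s)}sr$ for homogeneous $r,s$. $R_{\mathfrak p}$ is the localization at the homogeneous elements not in $\mathfrak p$. The period of a graded ring $S$ is the smallest $d>0$ such that $S_d$ contains a unit, or $0$ if no unit of positive degree exists. *)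

theory Defs
  imports "HOL-Algebra.Ring"
begin

definition unit_inv :: "'a::ring_1 \<Rightarrow> 'a" where
  "unit_inv e = (THE y. e * y = 1 \<and> y * e = 1)"

definition ipow :: "'a::ring_1 \<Rightarrow> int \<Rightarrow> 'a" where
  "ipow e k = (if 0 \<le> k then e ^ nat k else (unit_inv e) ^ nat (- k))"

definition homogeneous :: "(int \<Rightarrow> 'a set) \<Rightarrow> 'a \<Rightarrow> bool" where
  "homogeneous G x \<longleftrightarrow> (\<exists>d. x \<in> G d)"

definition hom_decomp :: "(int \<Rightarrow> 'a::ring_1 set) \<Rightarrow> 'a \<Rightarrow> (int \<Rightarrow> 'a) \<Rightarrow> bool" where
  "hom_decomp G x c \<longleftrightarrow> finite {d. c d \<noteq> 0} \<and> (\<forall>d. c d \<in> G d) \<and> x = sum c {d. c d \<noteq> 0}"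

definition graded_ring :: "(int \<Rightarrow> 'a::ring_1 set) \<Rightarrow> 'a \<Rightarrow> bool" where
  "graded_ring G \<epsilon> \<longleftrightarrow>
     (\<forall>d. 0 \<in> G d \<and> (\<forall>x\<in>G d. \<forall>y\<in>G d. x + y \<in> G d \<and> - x \<in> G d)) \<and>
     1 \<in> G 0 \<and>
     (\<forall>d e. \<forall>x\<in>G d. \<forall>y\<in>G e. x * y \<in> G (d + e)) \<and>
     (\<forall>x. \<exists>!c. hom_decomp G x c) \<and>
     \<epsilon> \<in> G 0 \<and> (\<exists>y. \<epsilon> * y = 1 \<and> y * \<epsilon> = 1) \<and>
     (\<forall>d e. \<forall>r\<in>G d. \<forall>s\<in>G e. r * s = ipow \<epsilon> (d * e) * (s * r))"

definition hom_prime :: "(int \<Rightarrow> 'a::ring_1 set) \<Rightarrow> 'a set \<Rightarrow> bool" where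
  "hom_prime G p \<longleftrightarrow>
     0 \<in> p \<and> (\<forall>x\<in>p. \<forall>y\<in>p. x + y \<in> p \<and> - x \<in> p) \<and>
     (\<forall>x\<in>p. \<forall>r. r * x \<in> p \<and> x * r \<in> p) \<and>
     (\<forall>x\<in>p. \<forall>c. hom_decomp G x c \<longrightarrow> (\<forall>d. c d \<in> p)) \<and>
     1 \<notin> p \<and>
     (\<forall>a b. homogeneous G a \<longrightarrow> homogeneous G b \<longrightarrow> a * b \<in> p \<longrightarrow> a \<in> p \<or> b \<in> p)"

definition hom_compl :: "(int \<Rightarrow> 'a set) \<Rightarrow> 'a set \<Rightarrow> 'a set" where
  "hom_compl G p = {s. homogeneous G s \<and> s \<notin> p}"

text \<open>Ore localization by right fractions a s^-1: (a,s) ~ (b,t) iff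
  there are c, d with s c = t d in S and a c = b d.\<close>
definition frac_rel :: "(int \<Rightarrow> 'a::ring_1 set) \<Rightarrow> 'a set \<Rightarrow> (('a \<times> 'a) \<times> ('a \<times> 'a)) set" where
  "frac_rel G p = {((a, s), (b, t)). s \<in> hom_compl G p \<and> t \<in> hom_compl G p \<and>
      (\<exists>c d. s * c = t * d \<and> s * c \<in> hom_compl G p \<and> a * c = b * d)}"

definition frac :: "(int \<Rightarrow> 'a::ring_1 set) \<Rightarrow> 'a set \<Rightarrow> 'a \<Rightarrow> 'a \<Rightarrow> ('a \<times> 'a) set" where
  "frac G p a s = frac_rel G p `` {(a, s)}"

definition loc :: "(int \<Rightarrow> 'a::ring_1 set) \<Rightarrow> 'a set \<Rightarrow> ('a \<times> 'a) set ring" where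
  "loc G p = \<lparr> carrier = (UNIV \<times> hom_compl G p) // frac_rel G p,
     mult = (\<lambda>X Y. SOME Z. \<exists>a s b t c u. (a, s) \<in> X \<and> (b, t) \<in> Y \<and> u \<in> hom_compl G p \<and>
                 b * u = s * c \<and> Z = frac G p (a * c) (t * u)),
     one = frac G p 1 1,
     zero = frac G p 0 1,
     add = (\<lambda>X Y. SOME Z. \<exists>a s b t c d. (a, s) \<in> X \<and> (b, t) \<in> Y \<and> s * c = t * d \<and>
                 s * c \<in> hom_compl G p \<and> Z = frac G p (a * c + b * d) (s * c)) \<rparr>"

definition loc_grading :: "(int \<Rightarrow> 'a::ring_1 set) \<Rightarrow> 'a set \<Rightarrow> int \<Rightarrow> ('a \<times> 'a) set set" where
  "loc_grading G p k = {X \<in> carrier (loc G p). \<exists>a s d e. (a, s) \<in> X \<and> a \<in> G d \<and> s \<in> G e \<and> k = d - e}"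

definition period :: "('b, 'm) monoid_scheme \<Rightarrow> (int \<Rightarrow> 'b set) \<Rightarrow> int" where
  "period S GS = (if \<exists>d>0. GS d \<inter> Units S \<noteq> {}
                  then (LEAST d. d > 0 \<and> GS d \<inter> Units S \<noteq> {}) else 0)"

end

theory Submission
  imports Defs
begin

text \<open>A homogeneous fraction \<open>a s\<^sup>-\<^sup>1\<close> of \<open>R\<^sub>p\<close> is a unit exactly when \<open>a \<notin> p\<close>: the inverse of
  \<open>A B\<^sup>-\<^sup>1\<close> is \<open>B A\<^sup>-\<^sup>1\<close>, and conversely a numerator in \<open>p\<close> stays in \<open>p\<close> for every equivalent
  fraction, so it cannot multiply to \<open>1\<close>. Hence the degrees of homogeneous units of \<open>R\<^sub>p\<close> are the
  differences \<open>deg f - deg g\<close> of homogeneous \<open>f, g \<notin> p\<close>. Since \<open>p\<close> is prime, the degrees of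
  homogeneous elements outside \<open>p\<close> form a submonoid of \<open>\<int>\<close>, and its group of differences is
  generated by its gcd; the least positive degree of a unit is therefore that gcd.

  Calculations in the noncommutative ring rest on homogeneous elements commuting up to the central
  unit \<open>\<epsilon>\<^sup>d\<^sup>e\<close>: this gives the right Ore condition and lets one move a homogeneous factor
  from the left of an equation to the right.\<close>

section \<open>Graded rings\<close>

lemma unit_inv_eqI:
  fixes e y :: "'a::ring_1"
  assumes "e * y = 1" and "y * e = 1"
  shows "unit_inv e = y"
  unfolding unit_inv_def
proof (rule the_equality)
  fix z assume "e * z = 1 \<and> z * e = 1"
  then have "z = (y * e) * z" using assms by simp
  also have "\<dots> = y" using \<open>e * z = 1 \<and> z * e = 1\<close> by (simp add: mult.assoc)
  finally show "z = y" .
qed (use assms in simp)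

lemma inverse_of_central_commute:
  fixes e y :: "'a::ring_1"
  assumes central: "\<And>x. e * x = x * e" and "e * y = 1" and "y * e = 1"
  shows "y * x = x * y"
proof -
  have "y * x = y * (x * e) * y" using assms(2) by (simp add: mult.assoc)
  also have "\<dots> = (y * e) * x * y" by (simp add: central mult.assoc)
  finally show ?thesis using assms(3) by simp
qed

locale graded =
  fixes G :: "int \<Rightarrow> 'a::ring_1 set" and \<epsilon> :: 'a
  assumes graded_ring: "graded_ring G \<epsilon>"
begin

lemma G_zero: "0 \<in> G d"
  using graded_ring unfolding graded_ring_def by blast

lemma G_one: "1 \<in> G 0"
  using graded_ring unfolding graded_ring_def by blast

lemma G_mult: "x \<in> G d \<Longrightarrow> y \<in> G e \<Longrightarrow> x * y \<in> G (d + e)"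
  using graded_ring unfolding graded_ring_def by blast

lemma hom_commute: "r \<in> G d \<Longrightarrow> s \<in> G e \<Longrightarrow> r * s = ipow \<epsilon> (d * e) * (s * r)"
  using graded_ring unfolding graded_ring_def by blast

definition hcomp :: "'a \<Rightarrow> int \<Rightarrow> 'a" where
  "hcomp x = (THE c. hom_decomp G x c)"

lemma hom_decomp_unique: "hom_decomp G x c \<Longrightarrow> hom_decomp G x c' \<Longrightarrow> c = c'"
  using graded_ring unfolding graded_ring_def by blast

lemma hom_decomp_hcomp: "hom_decomp G x (hcomp x)"
proof -
  have "\<exists>!c. hom_decomp G x c" using graded_ring unfolding graded_ring_def by blast
  then show ?thesis unfolding hcomp_def by (rule theI')
qed

lemma hcomp_mem: "hcomp x k \<in> G k"
  using hom_decomp_hcomp[of x] unfolding hom_decomp_def by blast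

lemma finite_hcomp: "finite {k. hcomp x k \<noteq> 0}"
  using hom_decomp_hcomp[of x] unfolding hom_decomp_def by blast

lemma sum_hcomp: "(\<Sum>k | hcomp x k \<noteq> 0. hcomp x k) = x"
  using hom_decomp_hcomp[of x] unfolding hom_decomp_def by (elim conjE) (rule sym)

lemma hom_decomp_zero: "hom_decomp G 0 (\<lambda>_. 0)"
  by (simp add: hom_decomp_def G_zero)

lemma hom_decomp_single:
  assumes "x \<in> G m"
  shows "hom_decomp G x (\<lambda>k. if k = m then x else 0)"
proof -
  have "{k. (if k = m then x else 0) \<noteq> 0} = (if x = 0 then {} else {m})" by auto
  then show ?thesis using assms G_zero by (simp add: hom_decomp_def)
qed

lemma hom_decomp_shift:
  assumes add: "\<And>x y. f (x + y) = f x + f y" and "f 0 = 0"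
    and deg: "\<And>k. f (hcomp y k) \<in> G (k + e)"
  shows "hom_decomp G (f y) (\<lambda>k. f (hcomp y (k - e)))"
proof -
  let ?K = "{k. hcomp y k \<noteq> 0}"
  have sub: "{k. f (hcomp y (k - e)) \<noteq> 0} \<subseteq> (\<lambda>k. k + e) ` ?K"
  proof
    fix k assume "k \<in> {k. f (hcomp y (k - e)) \<noteq> 0}"
    then have "k - e \<in> ?K" using \<open>f 0 = 0\<close> by auto
    then show "k \<in> (\<lambda>k. k + e) ` ?K" by (rule rev_image_eqI) simp
  qed
  have "f y = (\<Sum>k\<in>?K. f (hcomp y k))"
    using sum_comp_morphism[of f "hcomp y" ?K, OF \<open>f 0 = 0\<close> add] sum_hcomp[of y] by (simp add: o_def)
  also have "\<dots> = (\<Sum>k\<in>(\<lambda>k. k + e) ` ?K. f (hcomp y (k - e)))"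
    by (subst sum.reindex) (auto simp: inj_on_def)
  also have "\<dots> = (\<Sum>k | f (hcomp y (k - e)) \<noteq> 0. f (hcomp y (k - e)))"
    using finite_hcomp sub by (intro sum.mono_neutral_right) auto
  finally have "f y = (\<Sum>k | f (hcomp y (k - e)) \<noteq> 0. f (hcomp y (k - e)))" .
  moreover have "f (hcomp y (k - e)) \<in> G k" for k
    using deg[of "k - e"] by simp
  moreover have "finite {k. f (hcomp y (k - e)) \<noteq> 0}"
    using finite_subset[OF sub] finite_hcomp by blast
  ultimately show ?thesis unfolding hom_decomp_def by blast
qed

lemma hom_decomp_mult_left:
  "s \<in> G e \<Longrightarrow> hom_decomp G (s * y) (\<lambda>k. s * hcomp y (k - e))"
  by (rule hom_decomp_shift) (simp_all add: distrib_left, metis G_mult hcomp_mem add.commute)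

lemma hom_decomp_mult_right:
  "s \<in> G e \<Longrightarrow> hom_decomp G (y * s) (\<lambda>k. hcomp y (k - e) * s)"
  by (rule hom_decomp_shift) (auto simp: distrib_right intro: G_mult hcomp_mem)

lemma commute_if_commute_hom:
  assumes "\<And>d r. r \<in> G d \<Longrightarrow> a * r = r * a"
  shows "a * x = x * a"
proof -
  have "a * x = (\<Sum>k | hcomp x k \<noteq> 0. a * hcomp x k)"
    by (simp add: sum_distrib_left[symmetric] sum_hcomp)
  also have "\<dots> = (\<Sum>k | hcomp x k \<noteq> 0. hcomp x k * a)"
    using assms hcomp_mem by (intro sum.cong) auto
  finally show ?thesis by (simp add: sum_distrib_right[symmetric] sum_hcomp)
qed

lemma eps_commute: "\<epsilon> * x = x * \<epsilon>"
proof (rule commute_if_commute_hom)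
  have "\<epsilon> \<in> G 0" using graded_ring unfolding graded_ring_def by blast
  then show "\<epsilon> * r = r * \<epsilon>" if "r \<in> G d" for d r
    using hom_commute[OF \<open>\<epsilon> \<in> G 0\<close> that] by (simp add: ipow_def)
qed

lemma ipow_eps_commute: "ipow \<epsilon> k * x = x * ipow \<epsilon> k"
proof -
  obtain y where y: "\<epsilon> * y = 1" "y * \<epsilon> = 1"
    using graded_ring unfolding graded_ring_def by blast
  then have "unit_inv \<epsilon> * x = x * unit_inv \<epsilon>" for x
    using inverse_of_central_commute[OF eps_commute] unit_inv_eqI by metis
  then show ?thesis
    unfolding ipow_def using power_commuting_commutes eps_commute by auto
qed

lemma hom_right_ore: "\<sigma> \<in> G e \<Longrightarrow> \<exists>z. y * \<sigma> = \<sigma> * z"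
proof -
  assume \<sigma>: "\<sigma> \<in> G e"
  have "y * \<sigma> = (\<Sum>k | hcomp y k \<noteq> 0. hcomp y k * \<sigma>)"
    by (simp add: sum_distrib_right[symmetric] sum_hcomp)
  also have "\<dots> = (\<Sum>k | hcomp y k \<noteq> 0. \<sigma> * (ipow \<epsilon> (k * e) * hcomp y k))"
    using hom_commute[OF hcomp_mem \<sigma>] by (intro sum.cong) (simp_all add: ipow_eps_commute mult.assoc)
  also have "\<dots> = \<sigma> * (\<Sum>k | hcomp y k \<noteq> 0. ipow \<epsilon> (k * e) * hcomp y k)"
    by (simp add: sum_distrib_left)
  finally show ?thesis ..
qed

lemma hom_mult_eq_0_swap:
  assumes \<sigma>: "\<sigma> \<in> G e" and "\<sigma> * y = 0"
  shows "y * \<sigma> = 0"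
proof -
  have "(\<lambda>k. \<sigma> * hcomp y (k - e)) = (\<lambda>_. 0)"
    using hom_decomp_unique hom_decomp_mult_left[OF \<sigma>] \<open>\<sigma> * y = 0\<close> hom_decomp_zero by metis
  then have "\<sigma> * hcomp y k = 0" for k by (metis add_diff_cancel)
  then have "hcomp y k * \<sigma> = 0" for k
    using hom_commute[OF hcomp_mem \<sigma>] by simp
  then show ?thesis
    by (metis (no_types, lifting) sum.neutral sum_distrib_right sum_hcomp)
qed

lemma hom_left_eq_imp_right_eq: "\<sigma> \<in> G e \<Longrightarrow> \<sigma> * x = \<sigma> * y \<Longrightarrow> x * \<sigma> = y * \<sigma>"
  using hom_mult_eq_0_swap[of \<sigma> e "x - y"] by (simp add: algebra_simps)

lemma hom_right_eq_insert:
  assumes "r \<in> G d" "s \<in> G e" and "x * r = y * r"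
  shows "x * s * r = y * s * r"
proof -
  have "z * s * r = ipow \<epsilon> (e * d) * (z * r) * s" for z
    using hom_commute[OF assms(2,1)] by (metis ipow_eps_commute mult.assoc)
  then show ?thesis using assms(3) by metis
qed

end

section \<open>Homogeneous prime ideals\<close>

locale graded_prime = graded +
  fixes p :: "'a set"
  assumes hom_prime: "hom_prime G p"
begin

abbreviation S :: "'a set" where
  "S \<equiv> hom_compl G p"

lemma p_zero: "0 \<in> p"
  using hom_prime unfolding hom_prime_def by blast

lemma p_add: "x \<in> p \<Longrightarrow> y \<in> p \<Longrightarrow> x + y \<in> p"
  using hom_prime unfolding hom_prime_def by blast

lemma p_diff: "x \<in> p \<Longrightarrow> y \<in> p \<Longrightarrow> x - y \<in> p"
  using hom_prime p_add[of x "- y"] unfolding hom_prime_def by simp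

lemma p_mult_left: "x \<in> p \<Longrightarrow> r * x \<in> p"
  using hom_prime unfolding hom_prime_def by blast

lemma p_mult_right: "x \<in> p \<Longrightarrow> x * r \<in> p"
  using hom_prime unfolding hom_prime_def by blast

lemma hcomp_mem_p: "x \<in> p \<Longrightarrow> hom_decomp G x c \<Longrightarrow> c k \<in> p"
  using hom_prime unfolding hom_prime_def by blast

lemma one_notin_p: "1 \<notin> p"
  using hom_prime unfolding hom_prime_def by blast

lemma hom_mult_mem_p: "a \<in> G d \<Longrightarrow> b \<in> G e \<Longrightarrow> a * b \<in> p \<Longrightarrow> a \<in> p \<or> b \<in> p"
  using hom_prime unfolding hom_prime_def homogeneous_def by blast

lemma sum_mem_p: "(\<And>k. k \<in> K \<Longrightarrow> f k \<in> p) \<Longrightarrow> sum f K \<in> p"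
  by (induction K rule: infinite_finite_induct) (auto intro: p_zero p_add)

lemma mem_S_iff: "s \<in> S \<longleftrightarrow> (\<exists>d. s \<in> G d) \<and> s \<notin> p"
  by (simp add: hom_compl_def homogeneous_def)

lemma S_mult: "s \<in> S \<Longrightarrow> t \<in> S \<Longrightarrow> s * t \<in> S"
  unfolding mem_S_iff using G_mult hom_mult_mem_p by blast

lemma one_S: "1 \<in> S"
  unfolding mem_S_iff using G_one one_notin_p by blast

lemma mem_p_cancel_hom:
  assumes h: "h \<in> G e" "h \<notin> p" and "x * h \<in> p"
  shows "x \<in> p"
proof -
  have "hcomp x (k + e - e) * h \<in> p" for k
    using hcomp_mem_p[OF \<open>x * h \<in> p\<close> hom_decomp_mult_right[OF h(1)]] .
  then have "hcomp x k \<in> p" for k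
    using hom_mult_mem_p[OF hcomp_mem h(1)] h(2) by auto
  then have "(\<Sum>k | hcomp x k \<noteq> 0. hcomp x k) \<in> p" by (intro sum_mem_p)
  then show ?thesis by (simp only: sum_hcomp)
qed

text \<open>All homogeneous components of \<open>y\<close> except the one of degree \<open>m - e\<close> are annihilated by \<open>s\<close>
  on the left.\<close>

lemma hom_component_notin_p:
  assumes s: "s \<in> G e" "s \<notin> p" and sy: "s * y \<in> G m" "s * y \<notin> p"
  obtains h q where "y = h + q" "h \<in> G (m - e)" "h \<notin> p" "q \<in> p"
proof -
  let ?K = "{k. hcomp y k \<noteq> 0}"
  have decomp: "(\<lambda>k. s * hcomp y (k - e)) = (\<lambda>k. if k = m then s * y else 0)"
    using hom_decomp_unique[OF hom_decomp_mult_left[OF s(1)] hom_decomp_single[OF sy(1)]] .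
  have comp: "s * hcomp y k = (if k = m - e then s * y else 0)" for k
    using fun_cong[OF decomp, of "k + e"] by (simp add: eq_diff_eq)
  have "hcomp y k \<in> p" if "k \<noteq> m - e" for k
    using hom_mult_mem_p[OF s(1) hcomp_mem] comp[of k] that s(2) p_zero by auto
  then have q: "sum (hcomp y) (?K - {m - e}) \<in> p" by (intro sum_mem_p) auto
  have h: "hcomp y (m - e) \<notin> p"
    using comp[of "m - e"] sy(2) p_mult_left[of "hcomp y (m - e)" s] by auto
  have "y = sum (hcomp y) (insert (m - e) ?K)"
    using sum_hcomp[of y] finite_hcomp[of y] by (simp add: sum.insert_if)
  also have "\<dots> = hcomp y (m - e) + sum (hcomp y) (?K - {m - e})"
    using finite_hcomp by (rule sum.insert_remove)
  finally show ?thesis using that hcomp_mem h q by blast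
qed

lemma mem_p_cancel_S:
  assumes "s \<in> S" "s * y \<in> S" and "x * y \<in> p"
  shows "x \<in> p"
proof -
  obtain e m where "s \<in> G e" "s \<notin> p" "s * y \<in> G m" "s * y \<notin> p"
    using assms(1,2) mem_S_iff by blast
  then obtain h q where hq: "y = h + q" "h \<in> G (m - e)" "h \<notin> p" "q \<in> p"
    by (rule hom_component_notin_p)
  have "x * h = x * y - x * q" using hq(1) by (simp add: distrib_left)
  then have "x * h \<in> p" using assms(3) p_mult_left[OF hq(4)] p_diff by simp
  then show ?thesis using mem_p_cancel_hom hq(2,3) by blast
qed

section \<open>The graded localization\<close>

lemma mem_frac_rel_iff:
  "((a, s), (b, t)) \<in> frac_rel G p \<longleftrightarrow>
     s \<in> S \<and> t \<in> S \<and> (\<exists>c d. s * c = t * d \<and> s * c \<in> S \<and> a * c = b * d)"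
  by (simp add: frac_rel_def)

lemma frac_rel_refl: "s \<in> S \<Longrightarrow> ((a, s), (a, s)) \<in> frac_rel G p"
  unfolding mem_frac_rel_iff by (metis mult_1_right)

lemma frac_rel_sym: "((a, s), (b, t)) \<in> frac_rel G p \<Longrightarrow> ((b, t), (a, s)) \<in> frac_rel G p"
  unfolding mem_frac_rel_iff by metis

lemma frac_rel_trans:
  assumes "((a, s), (b, t)) \<in> frac_rel G p" and "((b, t), (x, w)) \<in> frac_rel G p"
  shows "((a, s), (x, w)) \<in> frac_rel G p"
proof -
  obtain c d where cd: "s * c = t * d" "s * c \<in> S" "a * c = b * d" and "s \<in> S" "t \<in> S"
    using assms(1) unfolding mem_frac_rel_iff by blast
  obtain c' d' where cd': "t * c' = w * d'" "t * c' \<in> S" "b * c' = x * d'" and "w \<in> S"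
    using assms(2) unfolding mem_frac_rel_iff by blast
  obtain e e' where "t \<in> G e" "t * c' \<in> G e'"
    using \<open>t \<in> S\<close> cd'(2) mem_S_iff by blast
  then obtain z where z: "(t * d) * (t * c') = (t * c') * z"
    using hom_right_ore by blast
  have "t * (d * (t * c')) = t * (c' * z)" using z by (simp add: mult.assoc)
  then have dz: "d * (t * c') * t = c' * z * t"
    using hom_left_eq_imp_right_eq[OF \<open>t \<in> G e\<close>] by blast
  have "s * (c * (t * c') * t) = (s * c) * (t * c') * t" by (simp only: mult.assoc)
  also have "\<dots> = (t * d) * (t * c') * t" by (simp only: cd(1))
  also have "\<dots> = (t * c') * z * t" by (simp only: z)
  also have "\<dots> = w * (d' * z * t)" by (simp only: cd'(1) mult.assoc)
  finally have eq: "s * (c * (t * c') * t) = w * (d' * z * t)" .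
  have "(s * c) * (t * c') * t \<in> S" using S_mult[OF S_mult[OF cd(2) cd'(2)] \<open>t \<in> S\<close>] .
  then have inS: "s * (c * (t * c') * t) \<in> S" by (simp only: mult.assoc)
  have "a * (c * (t * c') * t) = (a * c) * (t * c') * t" by (simp only: mult.assoc)
  also have "\<dots> = b * (d * (t * c') * t)" by (simp only: cd(3) mult.assoc)
  also have "\<dots> = b * (c' * z * t)" by (simp only: dz)
  also have "\<dots> = (b * c') * z * t" by (simp only: mult.assoc)
  also have "\<dots> = x * (d' * z * t)" by (simp only: cd'(3) mult.assoc)
  finally show ?thesis
    unfolding mem_frac_rel_iff using \<open>s \<in> S\<close> \<open>w \<in> S\<close> eq inS by blast
qed

lemma equiv_frac_rel: "equiv (UNIV \<times> S) (frac_rel G p)"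
proof (rule equivI)
  show "frac_rel G p \<subseteq> (UNIV \<times> S) \<times> (UNIV \<times> S)"
    by (auto simp: frac_rel_def)
  show "refl_on (UNIV \<times> S) (frac_rel G p)"
    unfolding refl_on_def using frac_rel_refl by blast
  show "sym (frac_rel G p)"
    unfolding sym_def using frac_rel_sym by fast
  show "trans (frac_rel G p)"
    unfolding trans_def using frac_rel_trans by fast
qed

lemma mem_frac_iff: "(b, t) \<in> frac G p a s \<longleftrightarrow> ((a, s), (b, t)) \<in> frac_rel G p"
  by (simp add: frac_def)

lemma frac_eq_iff:
  "s \<in> S \<Longrightarrow> t \<in> S \<Longrightarrow> frac G p a s = frac G p b t \<longleftrightarrow> ((a, s), (b, t)) \<in> frac_rel G p"
  unfolding frac_def using eq_equiv_class_iff[OF equiv_frac_rel] by simp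

lemma carrier_loc_iff: "X \<in> carrier (loc G p) \<longleftrightarrow> (\<exists>a s. s \<in> S \<and> X = frac G p a s)"
  by (auto simp: loc_def quotient_def frac_def)

lemma frac_rel_if_mem_carrier:
  "X \<in> carrier (loc G p) \<Longrightarrow> (a, s) \<in> X \<Longrightarrow> (b, t) \<in> X \<Longrightarrow> ((a, s), (b, t)) \<in> frac_rel G p"
  using in_quotient_imp_in_rel[OF equiv_frac_rel] by (simp add: loc_def)

lemma one_loc: "\<one>\<^bsub>loc G p\<^esub> = frac G p 1 1"
  by (simp add: loc_def)

lemma frac_rel_one_iff:
  "((x, w), (1, 1)) \<in> frac_rel G p \<longleftrightarrow> w \<in> S \<and> (\<exists>c. w * c \<in> S \<and> x * c = w * c)"
  unfolding mem_frac_rel_iff using one_S by auto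

lemma frac_rel_numerator_mem_p:
  assumes "((a, s), (b, t)) \<in> frac_rel G p" and "a \<in> p"
  shows "b \<in> p"
proof -
  obtain c d where "s * c = t * d" "s * c \<in> S" "a * c = b * d" "t \<in> S"
    using assms(1) unfolding mem_frac_rel_iff by blast
  moreover have "a * c \<in> p" using \<open>a \<in> p\<close> p_mult_right by blast
  ultimately show ?thesis using mem_p_cancel_S by metis
qed

text \<open>Multiplication in \<open>loc\<close> is a \<open>SOME\<close>-choice over representatives.\<close>

lemma loc_mult_frac_obtain:
  assumes "s \<in> S" "t \<in> S"
  obtains a' s' b' t' c u where "((a, s), (a', s')) \<in> frac_rel G p" "((b, t), (b', t')) \<in> frac_rel G p"
    "u \<in> S" "b' * u = s' * c"
    "frac G p a s \<otimes>\<^bsub>loc G p\<^esub> frac G p b t = frac G p (a' * c) (t' * u)"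
proof -
  define P where "P = (\<lambda>Z. \<exists>a' s' b' t' c u. (a', s') \<in> frac G p a s \<and> (b', t') \<in> frac G p b t \<and>
    u \<in> S \<and> b' * u = s' * c \<and> Z = frac G p (a' * c) (t' * u))"
  obtain e where "s \<in> G e" using assms(1) mem_S_iff by blast
  then obtain z where "b * s = s * z" using hom_right_ore by blast
  moreover have "(a, s) \<in> frac G p a s" "(b, t) \<in> frac G p b t"
    using assms frac_rel_refl unfolding mem_frac_iff by blast+
  ultimately have "P (frac G p (a * z) (t * s))"
    unfolding P_def using assms(1) by blast
  then have "P (SOME Z. P Z)" by (rule someI)
  moreover have "frac G p a s \<otimes>\<^bsub>loc G p\<^esub> frac G p b t = (SOME Z. P Z)"
    unfolding P_def loc_def by (simp only: monoid.select_convs)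
  ultimately show ?thesis using that unfolding P_def mem_frac_iff by blast
qed

lemma frac_rel_mult_swapped:
  assumes "((A, B), (a, s)) \<in> frac_rel G p" and "((B, A), (b, t)) \<in> frac_rel G p"
    and "u \<in> S" and "b * u = s * c"
  shows "((a * c, t * u), (1, 1)) \<in> frac_rel G p"
proof -
  obtain c1 d1 where 1: "B * c1 = s * d1" "B * c1 \<in> S" "A * c1 = a * d1" and "B \<in> S" "s \<in> S"
    using assms(1) unfolding mem_frac_rel_iff by blast
  obtain c2 d2 where 2: "A * c2 = t * d2" "A * c2 \<in> S" "B * c2 = b * d2" and "t \<in> S"
    using assms(2) unfolding mem_frac_rel_iff by blast
  obtain eu ew es eB where deg: "u \<in> G eu" "B * c1 \<in> G ew" "s \<in> G es" "B \<in> G eB"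
    using \<open>u \<in> S\<close> 1(2) \<open>s \<in> S\<close> \<open>B \<in> S\<close> unfolding mem_S_iff by blast
  obtain z where z: "d2 * u = u * z" using hom_right_ore[OF deg(1)] by blast
  obtain z' where z': "(B * c2 * u) * (B * c1) = (B * c1) * z'" using hom_right_ore[OF deg(2)] by blast
  have "s * (c * z * (B * c1)) = (s * c) * z * (B * c1)" by (simp only: mult.assoc)
  also have "\<dots> = b * (u * z) * (B * c1)" by (simp only: assms(4)[symmetric] mult.assoc)
  also have "\<dots> = (b * d2) * u * (B * c1)" by (simp only: z[symmetric] mult.assoc)
  also have "\<dots> = (B * c1) * z'" by (simp only: 2(3)[symmetric] z')
  also have "\<dots> = s * (d1 * z')" by (simp only: 1(1) mult.assoc)
  finally have r1: "c * z * (B * c1) * s = d1 * z' * s"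
    using hom_left_eq_imp_right_eq[OF deg(3)] by blast
  have "B * (c2 * u * (B * c1)) = B * (c1 * z')" using z' by (simp add: mult.assoc)
  then have "c2 * u * (B * c1) * B = c1 * z' * B"
    using hom_left_eq_imp_right_eq[OF deg(4)] by blast
  then have r2: "c2 * u * (B * c1) * s * B = c1 * z' * s * B"
    using hom_right_eq_insert[OF deg(4,3)] by blast
  \<comment> \<open>In the commutative case \<open>c3 = s d1 d2\<close> works; \<open>z\<close> and \<open>z'\<close> reorder the factors.\<close>
  define c3 where "c3 = z * (B * c1) * s * B"
  have "a * c * c3 = a * (c * z * (B * c1) * s) * B" by (simp only: c3_def mult.assoc)
  also have "\<dots> = a * (d1 * z' * s) * B" by (simp only: r1)
  also have "\<dots> = (a * d1) * (z' * s * B)" by (simp only: mult.assoc)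
  also have "\<dots> = A * (c1 * z' * s * B)" by (simp only: 1(3)[symmetric] mult.assoc)
  also have "\<dots> = A * (c2 * u * (B * c1) * s * B)" by (simp only: r2)
  also have "\<dots> = (A * c2) * u * (B * c1) * s * B" by (simp only: mult.assoc)
  finally have num: "a * c * c3 = (A * c2) * u * (B * c1) * s * B" .
  have "t * u * c3 = t * (u * z) * (B * c1) * s * B" by (simp only: c3_def mult.assoc)
  also have "\<dots> = (t * d2) * u * (B * c1) * s * B" by (simp only: z[symmetric] mult.assoc)
  finally have den: "t * u * c3 = (A * c2) * u * (B * c1) * s * B" by (simp only: 2(1))
  have "(A * c2) * u * (B * c1) * s * B \<in> S"
    using 2(2) \<open>u \<in> S\<close> 1(2) \<open>s \<in> S\<close> \<open>B \<in> S\<close> by (simp only: S_mult)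
  moreover have "t * u \<in> S" using \<open>t \<in> S\<close> \<open>u \<in> S\<close> by (rule S_mult)
  ultimately show ?thesis
    unfolding frac_rel_one_iff using num den by (intro conjI exI[of _ c3]) simp_all
qed

lemma frac_mult_frac_swapped:
  assumes "A \<in> S" "B \<in> S"
  shows "frac G p A B \<otimes>\<^bsub>loc G p\<^esub> frac G p B A = \<one>\<^bsub>loc G p\<^esub>"
proof -
  obtain a s b t c u where rel: "((A, B), (a, s)) \<in> frac_rel G p" "((B, A), (b, t)) \<in> frac_rel G p"
    "u \<in> S" "b * u = s * c"
    and prod: "frac G p A B \<otimes>\<^bsub>loc G p\<^esub> frac G p B A = frac G p (a * c) (t * u)"
    by (rule loc_mult_frac_obtain[OF assms(2,1)])
  have "t \<in> S" using rel(2) unfolding mem_frac_rel_iff by blast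
  then have "t * u \<in> S" using rel(3) by (rule S_mult)
  moreover have "((a * c, t * u), (1, 1)) \<in> frac_rel G p"
    using rel by (rule frac_rel_mult_swapped)
  ultimately have "frac G p (a * c) (t * u) = frac G p 1 1"
    using frac_eq_iff[OF _ one_S] by blast
  then show ?thesis using prod by (simp only: one_loc)
qed

lemma frac_in_Units:
  assumes "A \<in> S" "B \<in> S"
  shows "frac G p A B \<in> Units (loc G p)"
proof -
  have "frac G p A B \<in> carrier (loc G p)" "frac G p B A \<in> carrier (loc G p)"
    using assms unfolding carrier_loc_iff by blast+
  then show ?thesis
    unfolding Units_def using frac_mult_frac_swapped[OF assms] frac_mult_frac_swapped[OF assms(2,1)]
    by blast
qed

lemma Units_loc_numerator_notin_p:
  assumes "X \<in> Units (loc G p)" and "(a, s) \<in> X"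
  shows "a \<notin> p"
proof
  assume "a \<in> p"
  obtain Y where X: "X \<in> carrier (loc G p)" and Y: "Y \<in> carrier (loc G p)"
    and XY: "X \<otimes>\<^bsub>loc G p\<^esub> Y = \<one>\<^bsub>loc G p\<^esub>"
    using assms(1) unfolding Units_def by blast
  obtain x0 s0 y0 t0 where s0: "s0 \<in> S" and t0: "t0 \<in> S"
    and XY_frac: "X = frac G p x0 s0" "Y = frac G p y0 t0"
    using X Y unfolding carrier_loc_iff by blast
  obtain a' s' b' t' c u where a's': "((x0, s0), (a', s')) \<in> frac_rel G p"
    and b't': "((y0, t0), (b', t')) \<in> frac_rel G p" and "u \<in> S"
    and prod: "frac G p x0 s0 \<otimes>\<^bsub>loc G p\<^esub> frac G p y0 t0 = frac G p (a' * c) (t' * u)"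
    by (rule loc_mult_frac_obtain[OF s0 t0])
  have a': "(a', s') \<in> X" using a's' unfolding XY_frac mem_frac_iff .
  have "t' \<in> S" using b't' unfolding mem_frac_rel_iff by blast
  then have "t' * u \<in> S" using \<open>u \<in> S\<close> by (rule S_mult)
  moreover have "frac G p (a' * c) (t' * u) = frac G p 1 1"
    using XY prod unfolding XY_frac one_loc by simp
  ultimately have "((a' * c, t' * u), (1, 1)) \<in> frac_rel G p"
    using frac_eq_iff[OF _ one_S] by blast
  then obtain c3 where "(t' * u) * c3 \<in> S" "(a' * c) * c3 = (t' * u) * c3"
    unfolding frac_rel_one_iff by blast
  then have "a' * (c * c3) \<in> S" by (simp only: mult.assoc)
  moreover have "a' \<in> p"
    using frac_rel_numerator_mem_p frac_rel_if_mem_carrier[OF X assms(2) a'] \<open>a \<in> p\<close> by blast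
  ultimately show False using p_mult_right mem_S_iff by blast
qed

end

section \<open>Degrees of units and the period\<close>

lemma int_mult_mem_if_diff_closed:
  fixes T :: "int set"
  assumes zero: "0 \<in> T" and diff: "\<And>x y. x \<in> T \<Longrightarrow> y \<in> T \<Longrightarrow> x - y \<in> T"
    and "x \<in> T"
  shows "k * x \<in> T"
proof (induction k rule: int_induct[where k = 0])
  case (step1 i)
  have "(i + 1) * x = i * x - (0 - x)" by (simp add: distrib_right)
  then show ?case using diff[OF step1(2) diff[OF zero \<open>x \<in> T\<close>]] by simp
next
  case (step2 i)
  then show ?case using diff[OF _ \<open>x \<in> T\<close>] by (simp add: left_diff_distrib)
qed (use zero in simp)

lemma Gcd_mem_if_diff_closed:
  fixes D T :: "int set"
  assumes "D \<subseteq> T" and zero: "0 \<in> T" and diff: "\<And>x y. x \<in> T \<Longrightarrow> y \<in> T \<Longrightarrow> x - y \<in> T"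
    and Gcd_dvd: "\<And>x. x \<in> T \<Longrightarrow> Gcd D dvd x"
  shows "Gcd D \<in> T"
proof (cases "Gcd D = 0")
  case True
  from zero show ?thesis unfolding True .
next
  case False
  obtain d where "d \<in> D" "d \<noteq> 0"
    using False Gcd_0_iff[of D] by blast
  then have "nat \<bar>d\<bar> > 0 \<and> int (nat \<bar>d\<bar>) \<in> T"
    using \<open>D \<subseteq> T\<close> diff[OF zero, of d] by (cases "d \<ge> 0") auto
  then have ex: "\<exists>n. n > 0 \<and> int n \<in> T" by blast
  define m where "m = (LEAST n. n > 0 \<and> int n \<in> T)"
  have m: "m > 0" "int m \<in> T"
    using LeastI_ex[OF ex] unfolding m_def by auto
  have least: "m \<le> n" if "n > 0" "int n \<in> T" for n
    unfolding m_def using that by (intro Least_le) simp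
  have "int m dvd x" if "x \<in> T" for x
  proof (rule ccontr)
    assume "\<not> int m dvd x"
    then have "x mod int m \<noteq> 0" by (simp add: dvd_eq_mod_eq_0)
    moreover have "0 \<le> x mod int m" using m(1) by simp
    ultimately have pos: "x mod int m > 0" by linarith
    have "x mod int m = x - (x div int m) * int m"
      by (simp add: minus_div_mult_eq_mod)
    then have "int (nat (x mod int m)) \<in> T"
      using diff[OF that int_mult_mem_if_diff_closed[OF zero diff m(2)]] pos by simp
    then have "m \<le> nat (x mod int m)"
      using least pos by simp
    then have "int m \<le> x mod int m" using pos by (simp add: le_nat_iff)
    then show False using pos_mod_bound[of "int m" x] m(1) by linarith
  qed
  then have "int m dvd Gcd D" using \<open>D \<subseteq> T\<close> by (intro Gcd_greatest) auto
  with Gcd_dvd[OF m(2)] have "Gcd D = int m" by (simp add: zdvd_antisym_nonneg)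
  with m(2) show ?thesis by simp
qed

lemma Gcd_mem_differences:
  fixes M :: "int set"
  assumes "0 \<in> M" and add: "\<And>a b. a \<in> M \<Longrightarrow> b \<in> M \<Longrightarrow> a + b \<in> M"
  shows "Gcd M \<in> {a - b | a b. a \<in> M \<and> b \<in> M}"
proof (rule Gcd_mem_if_diff_closed)
  show "M \<subseteq> {a - b | a b. a \<in> M \<and> b \<in> M}" using \<open>0 \<in> M\<close> by force
  show "0 \<in> {a - b | a b. a \<in> M \<and> b \<in> M}" using \<open>0 \<in> M\<close> by force
next
  fix x y assume "x \<in> {a - b | a b. a \<in> M \<and> b \<in> M}" "y \<in> {a - b | a b. a \<in> M \<and> b \<in> M}"
  then obtain a b c d where "x = a - b" "y = c - d" "a \<in> M" "b \<in> M" "c \<in> M" "d \<in> M" by blast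
  then have "x - y = (a + d) - (b + c)" "a + d \<in> M" "b + c \<in> M" using add by auto
  then show "x - y \<in> {a - b | a b. a \<in> M \<and> b \<in> M}" by blast
next
  fix x assume "x \<in> {a - b | a b. a \<in> M \<and> b \<in> M}"
  then show "Gcd M dvd x" by (auto intro: dvd_diff Gcd_dvd)
qed

lemma period_eqI:
  fixes S :: "('b, 'm) monoid_scheme" and g :: int
  assumes "0 \<le> g" and "GS g \<inter> Units S \<noteq> {}"
    and "\<And>d. GS d \<inter> Units S \<noteq> {} \<Longrightarrow> g dvd d"
  shows "period S GS = g"
proof (cases "g = 0")
  case True
  have "\<not> (\<exists>d>0. GS d \<inter> Units S \<noteq> {})" using assms(3) True by fastforce
  then show ?thesis unfolding period_def True by (rule if_not_P)
next
  case False
  with assms(1,2) have ex: "\<exists>d>0. GS d \<inter> Units S \<noteq> {}" by force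
  from False assms have "(LEAST d. d > 0 \<and> GS d \<inter> Units S \<noteq> {}) = g"
    by (intro Least_equality) (auto intro: zdvd_imp_le)
  with ex show ?thesis unfolding period_def by (simp only: if_True)
qed

context graded_prime
begin

definition hom_degrees :: "int set" where
  "hom_degrees = {d. \<exists>f \<in> G d. f \<notin> p}"

lemma zero_mem_hom_degrees: "0 \<in> hom_degrees"
  unfolding hom_degrees_def using G_one one_notin_p by blast

lemma hom_degrees_add: "d \<in> hom_degrees \<Longrightarrow> e \<in> hom_degrees \<Longrightarrow> d + e \<in> hom_degrees"
  unfolding hom_degrees_def using G_mult hom_mult_mem_p by blast

lemma frac_mem_loc_grading:
  assumes "a \<in> G d" "s \<in> G e" "s \<notin> p"
  shows "frac G p a s \<in> loc_grading G p (d - e)"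
proof -
  have "s \<in> S" using assms(2,3) mem_S_iff by blast
  then have "(a, s) \<in> frac G p a s" "frac G p a s \<in> carrier (loc G p)"
    using frac_rel_refl unfolding mem_frac_iff carrier_loc_iff by blast+
  then show ?thesis unfolding loc_grading_def using assms(1,2) by blast
qed

lemma loc_grading_Units_iff:
  "loc_grading G p k \<inter> Units (loc G p) \<noteq> {} \<longleftrightarrow>
     k \<in> {d - e | d e. d \<in> hom_degrees \<and> e \<in> hom_degrees}"
proof
  assume "loc_grading G p k \<inter> Units (loc G p) \<noteq> {}"
  then obtain X a s d e where "X \<in> Units (loc G p)" "(a, s) \<in> X" "a \<in> G d" "s \<in> G e" "k = d - e"
    unfolding loc_grading_def by blast
  moreover have "a \<notin> p" using Units_loc_numerator_notin_p calculation(1,2) .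
  moreover have "s \<in> S"
    using frac_rel_if_mem_carrier[of X a s a s] calculation(1,2)
    unfolding Units_def mem_frac_rel_iff by blast
  ultimately show "k \<in> {d - e | d e. d \<in> hom_degrees \<and> e \<in> hom_degrees}"
    unfolding hom_degrees_def mem_S_iff by blast
next
  assume "k \<in> {d - e | d e. d \<in> hom_degrees \<and> e \<in> hom_degrees}"
  then obtain A B d e where "A \<in> G d" "A \<notin> p" "B \<in> G e" "B \<notin> p" "k = d - e"
    unfolding hom_degrees_def by blast
  then have "frac G p A B \<in> loc_grading G p k \<inter> Units (loc G p)"
    using frac_mem_loc_grading frac_in_Units mem_S_iff by blast
  then show "loc_grading G p k \<inter> Units (loc G p) \<noteq> {}" by blast
qed

lemma period_loc: "period (loc G p) (loc_grading G p) = Gcd hom_degrees"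
proof (rule period_eqI)
  have "Gcd hom_degrees \<in> {d - e | d e. d \<in> hom_degrees \<and> e \<in> hom_degrees}"
    using zero_mem_hom_degrees hom_degrees_add by (rule Gcd_mem_differences)
  then show "loc_grading G p (Gcd hom_degrees) \<inter> Units (loc G p) \<noteq> {}"
    using loc_grading_Units_iff by blast
  show "Gcd hom_degrees dvd k" if "loc_grading G p k \<inter> Units (loc G p) \<noteq> {}" for k
    using that unfolding loc_grading_Units_iff by (auto intro: dvd_diff Gcd_dvd)
qed simp

lemma Gcd_nonzero_hom_degrees: "Gcd {d. d \<noteq> 0 \<and> (\<exists>f \<in> G d. f \<notin> p)} = Gcd hom_degrees"
proof -
  have "hom_degrees = insert 0 {d. d \<noteq> 0 \<and> (\<exists>f \<in> G d. f \<notin> p)}"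
    using zero_mem_hom_degrees unfolding hom_degrees_def by blast
  then show ?thesis by simp
qed

end

theorem proposition2p14:
  fixes G :: "int \<Rightarrow> 'a::ring_1 set" and \<epsilon> :: 'a and p :: "'a set"
  assumes "graded_ring G \<epsilon>"
    and "hom_prime G p"
  shows "period (loc G p) (loc_grading G p) =
           Gcd {d. d \<noteq> 0 \<and> (\<exists>f \<in> G d. f \<notin> p)}"
proof -
  interpret graded_prime G \<epsilon> p
    using assms by unfold_locales
  show ?thesis using period_loc Gcd_nonzero_hom_degrees by simp
qed

end
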